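(* For every $N\ge 1$, the $(N-1)$-star graph (one central node adjacent to each of the other $N-1$ nodes, no other edges) has complex sign rank $1$; that is, there exists $\mathbf{z}\in\mathbb{C}^N$ such that $\operatorname{sign}(A_{ij})=\operatorname{sign}(\mathfrak{Re}(z_iz_j))$ for all $i\neq j$, where $\mathbf{A}$ is its adjacency matrix.
   Context: $\operatorname{sign}:\mathbb{R}\to\{+,-\}$ takes the value $-$ on $(-\infty,0]$ and $+$ on $(0,\infty)$. Diagonal entries of adjacency matrices are ignored. The complex sign rank of $\mathbf{A}\in\mathbb{R}^{N\times N}$ is the minimal $f$ such that there exists $\mathbf{Z}\in\mathbb{C}^{N\times f}$ with $\operatorname{sign}(A_{ij})=\operatorname{sign}(\mathfrak{Re}((\mathbf{Z}\mathbf{Z}^\top)_{ij}))$ for all $i\neq j$, where $\mathbf{Z}^\top$ is the (non-conjugated) transpose. *)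

theory Defs
  imports "HOL-Analysis.Analysis"
begin

text \<open>sign: False (i.e. "-") on (-inf,0], True (i.e. "+") on (0,inf).\<close>
definition sgnpm :: "real \<Rightarrow> bool" where
  "sgnpm x \<longleftrightarrow> x > 0"

text \<open>Adjacency matrix of the (N-1)-star on nodes 0..N-1 with centre 0
  (entries outside 0..N-1 are irrelevant).\<close>
definition star_adj :: "nat \<Rightarrow> nat \<Rightarrow> real" where
  "star_adj i j = (if i \<noteq> j \<and> (i = 0 \<or> j = 0) then 1 else 0)"

text \<open>Z in C^{N x f} is given as a function nat => nat => complex, column index k < f;
  (Z Z^T)_{ij} = sum_k Z i k * Z j k (non-conjugated transpose).\<close>
definition has_complex_sign_factorization ::
  "nat \<Rightarrow> (nat \<Rightarrow> nat \<Rightarrow> real) \<Rightarrow> nat \<Rightarrow> bool" where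
  "has_complex_sign_factorization N A f \<longleftrightarrow>
     (\<exists>Z :: nat \<Rightarrow> nat \<Rightarrow> complex. \<forall>i<N. \<forall>j<N. i \<noteq> j \<longrightarrow>
        sgnpm (A i j) = sgnpm (Re (\<Sum>k<f. Z i k * Z j k)))"

definition complex_sign_rank :: "nat \<Rightarrow> (nat \<Rightarrow> nat \<Rightarrow> real) \<Rightarrow> nat" where
  "complex_sign_rank N A = (LEAST f. has_complex_sign_factorization N A f)"

end

theory Submission
  imports Defs
begin

text \<open>Put the centre at \<open>z\<^sub>0 = 1\<close> and every leaf at \<open>1 + i\<close>. A centre-leaf product has
  real part \<open>1 > 0\<close>, while \<open>(1 + i)\<^sup>2 = 2i\<close> has real part \<open>0\<close>, which sign maps to \<open>-\<close>,
  matching the missing leaf-leaf edges. Rank \<open>0\<close> is impossible as soon as there is an edge: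
  the empty sum has real part \<open>0\<close>.\<close>

lemma has_complex_sign_factorization_1I:
  assumes "\<forall>i<N. \<forall>j<N. i \<noteq> j \<longrightarrow> sgnpm (A i j) = sgnpm (Re (z i * z j))"
  shows "has_complex_sign_factorization N A 1"
  unfolding has_complex_sign_factorization_def
  using assms by (intro exI[of _ "\<lambda>i k. z i"]) simp

lemma has_complex_sign_factorization_0_iff:
  "has_complex_sign_factorization N A 0 \<longleftrightarrow> (\<forall>i<N. \<forall>j<N. i \<noteq> j \<longrightarrow> A i j \<le> 0)"
  by (auto simp: has_complex_sign_factorization_def sgnpm_def not_less)

lemma complex_sign_rank_le:
  "has_complex_sign_factorization N A f \<Longrightarrow> complex_sign_rank N A \<le> f"
  unfolding complex_sign_rank_def by (rule Least_le)

lemma complex_sign_rank_pos: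
  assumes "has_complex_sign_factorization N A f"
    and "i < N" "j < N" "i \<noteq> j" "A i j > 0"
  shows "complex_sign_rank N A > 0"
proof -
  have "has_complex_sign_factorization N A (complex_sign_rank N A)"
    unfolding complex_sign_rank_def using assms(1) by (rule LeastI)
  moreover have "\<not> has_complex_sign_factorization N A 0"
    using assms(2-5) by (force simp: has_complex_sign_factorization_0_iff)
  ultimately show ?thesis by (metis gr0I)
qed

definition star_sign_vector :: "nat \<Rightarrow> complex" where
  "star_sign_vector i = (if i = 0 then 1 else Complex 1 1)"

lemma star_sign_vector_sign_pattern:
  "i \<noteq> j \<Longrightarrow> sgnpm (star_adj i j) = sgnpm (Re (star_sign_vector i * star_sign_vector j))"
  by (auto simp: star_sign_vector_def star_adj_def sgnpm_def)

theorem theorem4: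
  fixes N :: nat
  assumes "N \<ge> 1"
  shows "(\<exists>z :: nat \<Rightarrow> complex. \<forall>i<N. \<forall>j<N. i \<noteq> j \<longrightarrow>
            sgnpm (star_adj i j) = sgnpm (Re (z i * z j)))
         \<and> complex_sign_rank N star_adj \<le> 1
         \<and> (N \<ge> 2 \<longrightarrow> complex_sign_rank N star_adj = 1)"
proof (intro conjI impI)
  have pattern: "\<forall>i<N. \<forall>j<N. i \<noteq> j \<longrightarrow>
      sgnpm (star_adj i j) = sgnpm (Re (star_sign_vector i * star_sign_vector j))"
    using star_sign_vector_sign_pattern by blast
  then show "\<exists>z :: nat \<Rightarrow> complex. \<forall>i<N. \<forall>j<N. i \<noteq> j \<longrightarrow>
      sgnpm (star_adj i j) = sgnpm (Re (z i * z j))"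
    by blast
  have factorization: "has_complex_sign_factorization N star_adj 1"
    using pattern by (rule has_complex_sign_factorization_1I)
  then show le: "complex_sign_rank N star_adj \<le> 1"
    by (rule complex_sign_rank_le)
  assume "N \<ge> 2"
  then have "complex_sign_rank N star_adj > 0"
    by (intro complex_sign_rank_pos[OF factorization, of 0 1]) (auto simp: star_adj_def)
  with le show "complex_sign_rank N star_adj = 1" by simp
qed

end
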